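(* Let $\rho\in(0,1)\cup(1,\infty)$, $\xi\in\mathbb{R}$, and $H=\frac{1}{2(1+\rho\sinh^2\chi)}\big(\cosh^2\chi P_\chi^2+\frac{P_\phi^2}{\tanh^2\chi}+\xi\sinh^2\chi\big)$ on $(\chi,\phi)\in(0,\infty)\times\mathbb{S}^1$. Suppose the level set $H=E$, $P_\phi=L>0$ is nonempty, and set $\sigma=2(\rho-1)E-\xi$. Then $\sigma\le0\Rightarrow E>0$, and $\xi-2\rho E\ge0\Rightarrow E>0$. *)

theory Defs
  imports Complex_Main
begin

definition Ham :: "real \<Rightarrow> real \<Rightarrow> real \<Rightarrow> real \<Rightarrow> real \<Rightarrow> real \<Rightarrow> real" where
  "Ham \<rho> \<xi> \<chi> \<phi> P\<chi> P\<phi> =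
     (cosh \<chi> ^ 2 * P\<chi> ^ 2 + P\<phi> ^ 2 / tanh \<chi> ^ 2 + \<xi> * sinh \<chi> ^ 2)
     / (2 * (1 + \<rho> * sinh \<chi> ^ 2))"

end

theory Submission
  imports Defs
begin

text \<open>Multiplying the level-set equation by the positive denominator gives
  \<open>2 (1 + \<rho> s) E = cosh\<^sup>2 \<chi> P\<^sub>\<chi>\<^sup>2 + L\<^sup>2 / tanh\<^sup>2 \<chi> + \<xi> s\<close> with \<open>s = sinh\<^sup>2 \<chi> > 0\<close>; the kinetic terms
  are nonnegative and the centrifugal one is strictly positive, so \<open>\<xi> s < 2 (1 + \<rho> s) E\<close>.
  Both implications are linear consequences of this single strict inequality.\<close>

lemma Ham_potential_less:
  fixes \<rho> \<xi> \<chi> \<phi> P\<chi> P\<phi> :: real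
  assumes "\<rho> \<ge> 0" and "\<chi> > 0" and "P\<phi> \<noteq> 0"
  shows "\<xi> * sinh \<chi> ^ 2 < 2 * (1 + \<rho> * sinh \<chi> ^ 2) * Ham \<rho> \<xi> \<chi> \<phi> P\<chi> P\<phi>"
proof -
  have denom_pos: "1 + \<rho> * sinh \<chi> ^ 2 > 0"
    using assms(1) by (simp add: add_pos_nonneg)
  have centrifugal_pos: "P\<phi> ^ 2 / tanh \<chi> ^ 2 > 0"
    using assms(2,3) by simp
  have "2 * (1 + \<rho> * sinh \<chi> ^ 2) * Ham \<rho> \<xi> \<chi> \<phi> P\<chi> P\<phi>
      = cosh \<chi> ^ 2 * P\<chi> ^ 2 + P\<phi> ^ 2 / tanh \<chi> ^ 2 + \<xi> * sinh \<chi> ^ 2"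
    using denom_pos unfolding Ham_def by (simp add: field_simps)
  also have "\<dots> > \<xi> * sinh \<chi> ^ 2"
    using centrifugal_pos by (simp add: add_nonneg_pos)
  finally show ?thesis .
qed

lemma energy_pos_if_potential_less:
  fixes \<rho> \<xi> s E :: real
  assumes "s > 0" and "\<xi> * s < 2 * (1 + \<rho> * s) * E"
  shows "2 * (\<rho> - 1) * E - \<xi> \<le> 0 \<Longrightarrow> E > 0"
    and "\<xi> - 2 * \<rho> * E \<ge> 0 \<Longrightarrow> E > 0"
proof -
  assume "2 * (\<rho> - 1) * E - \<xi> \<le> 0"
  then have "2 * (\<rho> - 1) * E * s \<le> \<xi> * s"
    using assms(1) by (simp add: mult_right_mono)
  with assms(2) have "E * (1 + s) > 0"
    by (simp add: algebra_simps)
  then show "E > 0"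
    using assms(1) by (simp add: zero_less_mult_iff)
next
  assume "\<xi> - 2 * \<rho> * E \<ge> 0"
  then have "2 * \<rho> * E * s \<le> \<xi> * s"
    using assms(1) by (simp add: mult_right_mono)
  with assms(2) show "E > 0"
    by (simp add: algebra_simps)
qed

theorem lemma11:
  fixes \<rho> \<xi> E L :: real
  assumes "\<rho> > 0" and "\<rho> \<noteq> 1" and "L > 0"
    and "\<exists>\<chi> \<phi> P\<chi>. \<chi> > 0 \<and> Ham \<rho> \<xi> \<chi> \<phi> P\<chi> L = E"
  shows "(2 * (\<rho> - 1) * E - \<xi> \<le> 0 \<longrightarrow> E > 0) \<and> (\<xi> - 2 * \<rho> * E \<ge> 0 \<longrightarrow> E > 0)"
proof -
  obtain \<chi> \<phi> P\<chi> where \<chi>_pos: "\<chi> > 0" and level: "Ham \<rho> \<xi> \<chi> \<phi> P\<chi> L = E"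
    using assms(4) by blast
  have "\<xi> * sinh \<chi> ^ 2 < 2 * (1 + \<rho> * sinh \<chi> ^ 2) * E"
    using Ham_potential_less[of \<rho> \<chi> L \<xi> \<phi> P\<chi>] assms(1,3) \<chi>_pos level by simp
  moreover have "sinh \<chi> ^ 2 > 0"
    using \<chi>_pos by simp
  ultimately show ?thesis
    using energy_pos_if_potential_less by blast
qed

end
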